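(* Let $(X,*,0)$ be a solid weak BCC-algebra and $a\in I(X)$. If $x,y\in B(a)$, then $x*(x*y)\in B(a)$ and $y*(y*x)\in B(a)$.
   Context: A weak BCC-algebra is a set $X$ with a binary operation $*$ and a constant $0$ satisfying, for all $x,y,z\in X$: (i) $((x*y)*(z*y))*(x*z)=0$; (ii) $x*x=0$; (iii) $x*0=x$; (iv) $x*y=y*x=0$ implies $x=y$. The relation $x\leqslant y$ iff $x*y=0$ is a partial order on $X$. Let $I(X)$ be the set of minimal elements of $X$ with respect to $\leqslant$. For $a\in I(X)$ the branch initiated by $a$ is $B(a)=\{x\in X: a\leqslant x\}$; "belonging to the same branch" means lying in a common $B(a)$. A weak BCC-algebra is called (left) solid if $(x*y)*z=(x*z)*y$ holds for all $x,y$ belonging to the same branch and all $z\in X$. *)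

theory Defs
  imports Main
begin

definition weak_BCC :: "'a set \<Rightarrow> ('a \<Rightarrow> 'a \<Rightarrow> 'a) \<Rightarrow> 'a \<Rightarrow> bool" where
  "weak_BCC X m e \<longleftrightarrow>
     e \<in> X \<and> (\<forall>x\<in>X. \<forall>y\<in>X. m x y \<in> X) \<and>
     (\<forall>x\<in>X. \<forall>y\<in>X. \<forall>z\<in>X. m (m (m x y) (m z y)) (m x z) = e) \<and>
     (\<forall>x\<in>X. m x x = e) \<and>
     (\<forall>x\<in>X. m x e = x) \<and>
     (\<forall>x\<in>X. \<forall>y\<in>X. m x y = e \<and> m y x = e \<longrightarrow> x = y)"

definition bcc_le :: "('a \<Rightarrow> 'a \<Rightarrow> 'a) \<Rightarrow> 'a \<Rightarrow> 'a \<Rightarrow> 'a \<Rightarrow> bool" where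
  "bcc_le m e x y \<longleftrightarrow> m x y = e"

definition minimal_elems :: "'a set \<Rightarrow> ('a \<Rightarrow> 'a \<Rightarrow> 'a) \<Rightarrow> 'a \<Rightarrow> 'a set" where
  "minimal_elems X m e = {a \<in> X. \<forall>x\<in>X. bcc_le m e x a \<longrightarrow> x = a}"

definition branch :: "'a set \<Rightarrow> ('a \<Rightarrow> 'a \<Rightarrow> 'a) \<Rightarrow> 'a \<Rightarrow> 'a \<Rightarrow> 'a set" where
  "branch X m e a = {x \<in> X. bcc_le m e a x}"

definition same_branch :: "'a set \<Rightarrow> ('a \<Rightarrow> 'a \<Rightarrow> 'a) \<Rightarrow> 'a \<Rightarrow> 'a \<Rightarrow> 'a \<Rightarrow> bool" where
  "same_branch X m e x y \<longleftrightarrow> (\<exists>a\<in>minimal_elems X m e. x \<in> branch X m e a \<and> y \<in> branch X m e a)"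

definition solid_weak_BCC :: "'a set \<Rightarrow> ('a \<Rightarrow> 'a \<Rightarrow> 'a) \<Rightarrow> 'a \<Rightarrow> bool" where
  "solid_weak_BCC X m e \<longleftrightarrow> weak_BCC X m e \<and>
     (\<forall>x\<in>X. \<forall>y\<in>X. \<forall>z\<in>X. same_branch X m e x y \<longrightarrow> m (m x y) z = m (m x z) y)"

end

theory Submission
  imports Defs
begin

text \<open>Axiom (i) with x \<le> z says that right multiplication is monotone. Hence for
  x, y in B(a) we get 0 = a * y \<le> x * y. Solidity applied to the pair a, a gives
  (a * u) * a = (a * a) * u = 0 * u, which is 0 whenever 0 \<le> u; minimality of a
  then forces a * u = a, and monotonicity yields a = a * u \<le> x * u. Taking
  u = x * y puts x * (x * y) in B(a).\<close>

lemma weak_BCC_mult_closed: "weak_BCC X m e \<Longrightarrow> x \<in> X \<Longrightarrow> y \<in> X \<Longrightarrow> m x y \<in> X"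
  by (simp add: weak_BCC_def)

lemma weak_BCC_mult_self: "weak_BCC X m e \<Longrightarrow> x \<in> X \<Longrightarrow> m x x = e"
  by (simp add: weak_BCC_def)

lemma weak_BCC_mult_zero_right: "weak_BCC X m e \<Longrightarrow> x \<in> X \<Longrightarrow> m x e = x"
  by (simp add: weak_BCC_def)

lemma bcc_le_mult_right:
  assumes W: "weak_BCC X m e"
    and X: "a \<in> X" "x \<in> X" "u \<in> X"
    and le: "bcc_le m e a x"
  shows "bcc_le m e (m a u) (m x u)"
proof -
  have "m (m (m a u) (m x u)) (m a x) = e"
    using W X unfolding weak_BCC_def by blast
  then have "m (m (m a u) (m x u)) e = e"
    using le by (simp add: bcc_le_def)
  then show ?thesis
    using W X by (simp add: bcc_le_def weak_BCC_mult_closed weak_BCC_mult_zero_right)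
qed

lemma branch_zero_le_mult:
  assumes W: "weak_BCC X m e"
    and a: "a \<in> X"
    and x: "x \<in> branch X m e a" and y: "y \<in> branch X m e a"
  shows "bcc_le m e e (m x y)"
proof -
  have "bcc_le m e (m a y) (m x y)"
    using bcc_le_mult_right[OF W a] x y by (simp add: branch_def)
  moreover have "m a y = e" using y by (simp add: branch_def bcc_le_def)
  ultimately show ?thesis by simp
qed

lemma minimal_elems_mult_eq:
  assumes S: "solid_weak_BCC X m e"
    and a: "a \<in> minimal_elems X m e"
    and u: "u \<in> X" "bcc_le m e e u"
  shows "m a u = a"
proof -
  have W: "weak_BCC X m e" and aX: "a \<in> X"
    using S a by (auto simp: solid_weak_BCC_def minimal_elems_def)
  have aa: "m a a = e" using weak_BCC_mult_self[OF W aX] .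
  then have "same_branch X m e a a"
    using a aX by (auto simp: same_branch_def branch_def bcc_le_def)
  then have "m (m a u) a = m (m a a) u"
    using S aX u unfolding solid_weak_BCC_def by (metis (no_types))
  also have "\<dots> = e" using aa u by (simp add: bcc_le_def)
  finally have "bcc_le m e (m a u) a" by (simp add: bcc_le_def)
  moreover have "m a u \<in> X" using weak_BCC_mult_closed[OF W aX u(1)] .
  ultimately show ?thesis using a by (simp add: minimal_elems_def)
qed

lemma branch_mult_mem:
  assumes S: "solid_weak_BCC X m e"
    and a: "a \<in> minimal_elems X m e"
    and x: "x \<in> branch X m e a"
    and u: "u \<in> X" "bcc_le m e e u"
  shows "m x u \<in> branch X m e a"
proof -
  have W: "weak_BCC X m e" and aX: "a \<in> X"
    using S a by (auto simp: solid_weak_BCC_def minimal_elems_def)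
  have "bcc_le m e (m a u) (m x u)"
    using bcc_le_mult_right[OF W aX _ u(1)] x by (simp add: branch_def)
  then have "bcc_le m e a (m x u)"
    using minimal_elems_mult_eq[OF S a u] by simp
  moreover have "m x u \<in> X" using weak_BCC_mult_closed[OF W _ u(1)] x by (simp add: branch_def)
  ultimately show ?thesis by (simp add: branch_def)
qed

theorem corollary3p3:
  fixes X :: "'a set" and m :: "'a \<Rightarrow> 'a \<Rightarrow> 'a" and e :: 'a and a x y :: 'a
  assumes "solid_weak_BCC X m e"
    and "a \<in> minimal_elems X m e"
    and "x \<in> branch X m e a" and "y \<in> branch X m e a"
  shows "m x (m x y) \<in> branch X m e a \<and> m y (m y x) \<in> branch X m e a"
proof -
  have W: "weak_BCC X m e" and aX: "a \<in> X"
    using assms(1,2) by (auto simp: solid_weak_BCC_def minimal_elems_def)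
  have xX: "x \<in> X" and yX: "y \<in> X" using assms(3,4) by (auto simp: branch_def)
  have "m x y \<in> X" "m y x \<in> X" using W xX yX by (auto intro: weak_BCC_mult_closed)
  moreover have "bcc_le m e e (m x y)" "bcc_le m e e (m y x)"
    using branch_zero_le_mult[OF W aX] assms(3,4) by auto
  ultimately show ?thesis
    using branch_mult_mem[OF assms(1,2)] assms(3,4) by blast
qed

end
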